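(* There exists a constant $C>0$ depending only on $h$ such that for all $\delta\in(-1,1)$ and all $x\in[0,1]^2$, $$|\Psi_\delta(x)-x|\le C|\delta|\,\tilde d(x),$$ where $\tilde d(x)$ denotes the distance from $x$ to the set of corners of $[0,1]^2$.
   Context: Fix a function $h:[0,\tfrac12)\to[0,\infty)$ which is weakly increasing, satisfies $h(r)=0$ for all $r\le\frac1{10}$, $h(r)\to\infty$ as $r\to\frac12$, and is thrice continuously differentiable with $(h'(r))^2=O((r+h(r))^3)$, $h''(r)h'(r)=O((r+h(r))^3)$, $h'''(r)=O((r+h(r))^2)$. Let $r_0\in(0,\frac12)$ be the unique solution of $2r_0h(r_0)+r_0^2=\frac14$, and define $\Theta(r)=\arccos\frac{h(r)}{h(r)+r}$ for $r\le r_0$ and $\Theta(r)=\arcsin\frac{1}{2(h(r)+r)}$ for $r>r_0$. The map $(r,\theta)\mapsto(x_1,x_2)$, $x_1=\frac12+(r+h(r))\sin(\theta\Theta(r))$, $x_2=(r+h(r))\cos(\theta\Theta(r))-h(r)$, is a bijection from $(0,\frac12)\times[-1,1]$ onto $[0,1]\times[0,\frac12)\setminus\{(\frac12,0)\}$; let $K$ denote its inverse. For $\delta\in(-1,1)$ and $r\in(0,\frac12)$, let $w_r(\theta)=1+h'(r)-h'(r)\cos(\theta\Theta(r))$ and let $g_r=g_{r,\delta}:[-1,1]\to[-1,1]$ be the unique increasing bijection with $(1+\delta)\int_{-1}^{\ell}w_r(\theta)\,d\theta=\int_{-1}^{g_r(\ell)}w_r(\theta)\,d\theta$ for $\ell\in[-1,0]$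 and $(1-\delta)\int_{\ell}^{1}w_r(\theta)\,d\theta=\int_{g_r(\ell)}^{1}w_r(\theta)\,d\theta$ for $\ell\in[0,1]$. Define $\Psi_\delta:[0,1]^2\to[0,1]^2$ by: $\Psi_\delta(x)=K^{-1}(r,g_r(\theta))$ where $(r,\theta)=K(x)$, for $x\in[0,1]\times[0,\frac12)\setminus\{(\frac12,0)\}$; $\Psi_\delta(\frac12,0)=(\frac12,0)$; for $x_2>\frac12$, $\Psi_\delta(x_1,x_2)=(\Psi^1_\delta(x_1,1-x_2),\,1-\Psi^2_\delta(x_1,1-x_2))$ where $\Psi_\delta=(\Psi^1_\delta,\Psi^2_\delta)$; and on $x_2=\frac12$, $\Psi_\delta(x_1,\frac12)=((1+\delta)x_1,\frac12)$ for $x_1\le\frac12$ and $\Psi_\delta(x_1,\frac12)=(\frac{1+\delta}2+(1-\delta)(x_1-\frac12),\frac12)$ for $x_1\ge\frac12$. *)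

theory Defs
  imports "HOL-Analysis.Analysis"
begin

text \<open>All objects are parametrised by the fixed function h. Derivatives of h are
taken as deriv h (on the open interval (0,1/2) this is the genuine derivative).\<close>

definition r0 :: "(real \<Rightarrow> real) \<Rightarrow> real" where
  "r0 h = (THE r. 0 < r \<and> r < 1/2 \<and> 2 * r * h r + r\<^sup>2 = 1/4)"

definition Theta :: "(real \<Rightarrow> real) \<Rightarrow> real \<Rightarrow> real" where
  "Theta h r = (if r \<le> r0 h then arccos (h r / (h r + r))
                else arcsin (1 / (2 * (h r + r))))"

definition Kinv :: "(real \<Rightarrow> real) \<Rightarrow> real \<times> real \<Rightarrow> real \<times> real" where
  "Kinv h p = (case p of (r, \<theta>) \<Rightarrow>
      (1/2 + (r + h r) * sin (\<theta> * Theta h r),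
       (r + h r) * cos (\<theta> * Theta h r) - h r))"

definition K :: "(real \<Rightarrow> real) \<Rightarrow> real \<times> real \<Rightarrow> real \<times> real" where
  "K h x = (THE p. p \<in> {0<..<1/2} \<times> {-1..1} \<and> Kinv h p = x)"

definition wfun :: "(real \<Rightarrow> real) \<Rightarrow> real \<Rightarrow> real \<Rightarrow> real" where
  "wfun h r \<theta> = 1 + deriv h r - deriv h r * cos (\<theta> * Theta h r)"

definition gfun :: "(real \<Rightarrow> real) \<Rightarrow> real \<Rightarrow> real \<Rightarrow> real \<Rightarrow> real" where
  "gfun h \<delta> r l = (THE m. m \<in> {-1..1} \<and>
      (if l \<le> 0
       then (1 + \<delta>) * integral {-1..l} (wfun h r) = integral {-1..m} (wfun h r)
       else (1 - \<delta>) * integral {l..1} (wfun h r) = integral {m..1} (wfun h r)))"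

definition Psi_low :: "(real \<Rightarrow> real) \<Rightarrow> real \<Rightarrow> real \<times> real \<Rightarrow> real \<times> real" where
  "Psi_low h \<delta> x = (if x = (1/2, 0) then (1/2, 0)
      else (case K h x of (r, \<theta>) \<Rightarrow> Kinv h (r, gfun h \<delta> r \<theta>)))"

definition Psi :: "(real \<Rightarrow> real) \<Rightarrow> real \<Rightarrow> real \<times> real \<Rightarrow> real \<times> real" where
  "Psi h \<delta> x = (case x of (x1, x2) \<Rightarrow>
      if x2 = 1/2 then
        (if x1 \<le> 1/2 then ((1 + \<delta>) * x1, 1/2)
         else ((1 + \<delta>)/2 + (1 - \<delta>) * (x1 - 1/2), 1/2))
      else if x2 > 1/2 then
        (fst (Psi_low h \<delta> (x1, 1 - x2)), 1 - snd (Psi_low h \<delta> (x1, 1 - x2)))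
      else Psi_low h \<delta> (x1, x2))"

definition corners :: "(real \<times> real) set" where
  "corners = {(0,0), (0,1), (1,0), (1,1)}"

end

theory Submission
  imports Defs
begin

text \<open>In the coordinates \<open>(r, \<theta>) = K x\<close> the map \<open>\<Psi>\<^sub>\<delta>\<close> moves only the angle, \<open>\<theta> \<mapsto> g\<^sub>r(\<theta>)\<close>.
  The weight \<open>w\<^sub>r\<close> lies between \<open>1\<close> and its value at \<open>\<theta> = \<plusminus>1\<close>, which the growth condition on
  \<open>h'\<close> bounds uniformly in \<open>r\<close>; comparing integrals of \<open>w\<^sub>r\<close> then shows that \<open>g\<^sub>r\<close> moves \<open>\<theta>\<close> by at
  most a constant times \<open>\<bar>\<delta>\<bar> (1 - \<bar>\<theta>\<bar>)\<close>. Along a level arc, \<open>K\<inverse>\<close> is Lipschitz in \<open>\<theta>\<close> with constant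
  \<open>2 (r + h r) \<Theta>(r)\<close>, and the arc length \<open>(r + h r) \<Theta>(r) (1 - \<bar>\<theta>\<bar>)\<close> to the nearer end of the arc is at
  most six times the distance to the nearer bottom corner: by \<open>x \<le> 2 sin x\<close> it is bounded by the
  chord, and the chord is controlled because both ends of the arc lie in the square. The upper half
  of the square follows by reflection, and the middle line is explicit.\<close>

lemma self_le_two_sin:
  fixes x :: real assumes "0 \<le> x" "x \<le> pi/2" shows "x \<le> 2 * sin x"
proof (cases "x \<le> pi/3")
  case True
  have "(\<lambda>t. 2 * sin t - t) 0 \<le> (\<lambda>t. 2 * sin t - t) x"
  proof (rule DERIV_nonneg_imp_increasing_open[OF assms(1)])
    fix t assume t: "0 < t" "t < x"
    have "cos (pi/3) \<le> cos t"
      using t True by (intro cos_monotone_0_pi_le) auto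
    then have "1/2 \<le> cos t" by (simp add: cos_60)
    then show "\<exists>y. ((\<lambda>t. 2 * sin t - t) has_real_derivative y) (at t) \<and> 0 \<le> y"
      by (intro exI[of _ "2 * cos t - 1"]) (auto intro!: derivative_eq_intros)
  qed (intro continuous_intros)
  then show ?thesis by simp
next
  case False
  have "sin (pi/3) \<le> sin x"
    using False assms by (intro sin_monotone_2pi_le) auto
  then have "sqrt 3 / 2 \<le> sin x" by (simp add: sin_60)
  moreover have "1.7 \<le> sqrt (3::real)" by (rule real_le_rsqrt) (simp add: power2_eq_square)
  moreover have "pi \<le> 3.2" using pi_approx by simp
  ultimately show ?thesis using assms by simp
qed

lemma one_le_sin_plus_cos:
  fixes x :: real assumes "0 \<le> x" "x \<le> pi/2" shows "1 \<le> sin x + cos x"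
proof -
  have "0 \<le> sin x" "sin x \<le> 1" "0 \<le> cos x" "cos x \<le> 1"
    using assms by (auto intro!: sin_ge_zero cos_ge_zero)
  then have "(sin x)\<^sup>2 \<le> sin x" "(cos x)\<^sup>2 \<le> cos x"
    by (auto simp: power2_eq_square intro: mult_left_le_one_le)
  then show ?thesis using sin_cos_squared_add[of x] by linarith
qed

lemma abs_sin_diff_le: "\<bar>sin u - sin v\<bar> \<le> \<bar>u - v\<bar>" for u v :: real
proof -
  have "\<bar>sin u - sin v\<bar> = 2 * \<bar>sin ((u - v) / 2)\<bar> * \<bar>cos ((u + v) / 2)\<bar>"
    by (simp add: sin_diff_sin abs_mult)
  also have "\<dots> \<le> 2 * \<bar>(u - v) / 2\<bar> * 1"
    by (intro mult_mono abs_sin_x_le_abs_x) auto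
  finally show ?thesis by simp
qed

lemma abs_cos_diff_le: "\<bar>cos u - cos v\<bar> \<le> \<bar>u - v\<bar>" for u v :: real
proof -
  have "\<bar>cos u - cos v\<bar> = 2 * \<bar>sin ((u + v) / 2)\<bar> * \<bar>sin ((v - u) / 2)\<bar>"
    by (simp add: cos_diff_cos abs_mult)
  also have "\<dots> \<le> 2 * 1 * \<bar>(v - u) / 2\<bar>"
    by (intro mult_mono abs_sin_x_le_abs_x) auto
  finally show ?thesis by simp
qed

lemma le_one_plus_square: "x \<le> 1 + x\<^sup>2" for x :: real
proof -
  have "0 \<le> (x - 1/2)\<^sup>2" by simp
  then show ?thesis by (simp add: power2_eq_square algebra_simps)
qed

lemma expanding_unique_preimage:
  fixes F :: "real \<Rightarrow> real"
  assumes "a \<le> b" and cont: "continuous_on {a..b} F"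
    and expand: "\<And>s t. a \<le> s \<Longrightarrow> s \<le> t \<Longrightarrow> t \<le> b \<Longrightarrow> t - s \<le> F t - F s"
    and y: "F a \<le> y" "y \<le> F b"
  shows "\<exists>!m. m \<in> {a..b} \<and> F m = y"
proof (rule ex_ex1I)
  show "\<exists>m. m \<in> {a..b} \<and> F m = y"
    using IVT'[of F a y b] y cont \<open>a \<le> b\<close> by auto
next
  fix m m' assume "m \<in> {a..b} \<and> F m = y" "m' \<in> {a..b} \<and> F m' = y"
  then show "m = m'" using expand[of m m'] expand[of m' m] by (cases "m \<le> m'") auto
qed

lemma infdist_doubleton: "infdist x {a, b} = min (dist x a) (dist x b)"
proof -
  have "{a, b} = {a} \<union> {b}" by auto
  then show ?thesis using infdist_Un_min[of "{a}" "{b}" x] by simp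
qed

lemma infdist_corners:
  "infdist x corners = min (infdist x {(0,0), (1,0)}) (infdist x {(0,1), (1,1)})"
  using infdist_Un_min[of "{(0,0), (1,0)}" "{(0,1), (1,1)}" x]
  by (simp add: corners_def insert_commute)

lemma infdist_bottom_corners:
  "infdist (x1, x2) {(0,0), (1,0)} = min (norm (x1, x2)) (norm (x1 - 1, x2))" for x1 x2 :: real
  by (simp add: infdist_doubleton dist_norm)

lemma infdist_bottom_corners_reflect:
  "infdist (1 - x1, x2) {(0,0), (1,0)} = infdist (x1, x2) {(0,0), (1,0)}" for x1 x2 :: real
  by (simp add: infdist_bottom_corners norm_Pair power2_commute min.commute)

lemma infdist_bottom_corners_left:
  fixes x1 x2 :: real
  assumes "x1 \<le> 1/2" shows "infdist (x1, x2) {(0,0), (1,0)} = norm (x1, x2)"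
  using assms by (simp add: infdist_bottom_corners norm_Pair abs_le_square_iff[symmetric])

lemma infdist_corners_lower_half:
  fixes x1 x2 :: real
  assumes "0 \<le> x2" "x2 \<le> 1/2"
  shows "infdist (x1, x2) corners = infdist (x1, x2) {(0,0), (1,0)}"
proof -
  have "x2\<^sup>2 \<le> (x2 - 1)\<^sup>2" using assms by (simp add: abs_le_square_iff[symmetric])
  then show ?thesis
    by (simp add: infdist_corners infdist_doubleton dist_norm norm_Pair min_def)
qed

lemma infdist_corners_reflect:
  "infdist (x1, 1 - x2) corners = infdist (x1, x2) corners" for x1 x2 :: real
  by (simp add: infdist_corners infdist_doubleton dist_norm norm_Pair power2_commute min.commute)

lemma infdist_corners_mid_line: "1/2 \<le> infdist (x1, 1/2) corners" for x1 :: real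
proof -
  have "1/2 \<le> norm (a, 1/2::real)" for a :: real
    using norm_snd_le[of "1/2::real" a] by simp
  moreover have "norm (a, - 1/2::real) = norm (a, 1/2::real)" for a :: real
    by (simp add: norm_Pair)
  ultimately show ?thesis
    by (simp add: infdist_corners infdist_doubleton dist_norm)
qed

lemma Kinv_reflect:
  "Kinv h (r, -\<theta>) = (1 - fst (Kinv h (r, \<theta>)), snd (Kinv h (r, \<theta>)))"
  by (simp add: Kinv_def)

text \<open>With \<open>R = r + h r\<close>, \<open>T = Theta h r\<close> and \<open>H = h r\<close> the point on the right is \<open>Kinv h (r, t)\<close>.
  The chord \<open>R sin p\<close>, \<open>p = T (1 + t)\<close>, is bounded by \<open>2 x\<^sub>1 + x\<^sub>2\<close> because the end \<open>t = -1\<close> of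
  the arc lies in \<open>[0,1] \<times> [0,\<infinity>)\<close> (hypotheses \<open>H\<close> and \<open>half\<close>).\<close>
lemma arc_le_norm:
  fixes R T H t :: real
  assumes T: "0 \<le> T" "T \<le> pi/2" and R: "0 \<le> R"
    and H: "H \<le> R * cos T" and half: "R * sin T \<le> 1/2"
    and t: "-1 \<le> t" "t \<le> 0"
  shows "R * sin (T * (1 + t)) \<le> 3 * norm (1/2 + R * sin (t * T), R * cos (t * T) - H)"
proof -
  define p where "p = T * (1 + t)"
  define a where "a = R * cos T"
  define b where "b = R * sin T"
  define x1 where "x1 = 1/2 + R * sin (t * T)"
  define x2 where "x2 = R * cos (t * T) - H"
  have p: "0 \<le> p" "p \<le> pi/2" using T t mult_left_le[of "1 + t" T] by (auto simp: p_def)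
  have sp: "0 \<le> sin p" and cp: "0 \<le> cos p" "cos p \<le> 1"
    using p by (auto intro!: sin_ge_zero cos_ge_zero)
  have a: "0 \<le> a" and b: "0 \<le> b"
    using T R by (auto simp: a_def b_def intro!: mult_nonneg_nonneg sin_ge_zero cos_ge_zero)
  have tT: "t * T = p - T" by (simp add: p_def algebra_simps)
  have x1: "x1 = 1/2 + a * sin p - b * cos p" and x2: "x2 = a * cos p + b * sin p - H"
    unfolding x1_def x2_def tT by (simp_all add: a_def b_def sin_diff cos_diff algebra_simps)
  have "b * cos p \<le> 1/2" using mult_mono[of b "1/2" "cos p" 1] b cp half by (simp add: b_def)
  moreover have "a \<le> a * (sin p + cos p)" using a one_le_sin_plus_cos[OF p] by (simp add: mult_le_cancel_left1)
  ultimately have "(a + b) * sin p \<le> 2 * x1 + x2" using H by (simp add: x1 x2 a_def algebra_simps)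
  moreover have "R * sin p \<le> (a + b) * sin p"
    using sp R one_le_sin_plus_cos[OF T] mult_left_mono[of 1 "sin T + cos T" R]
    by (intro mult_right_mono) (simp_all add: a_def b_def algebra_simps)
  moreover have "x1 \<le> norm (x1, x2)" "x2 \<le> norm (x1, x2)"
    using norm_fst_le[of x1 x2] norm_snd_le[of x2 x1] by auto
  ultimately show ?thesis by (simp add: p_def x1_def x2_def)
qed

lemma expanding_preimage_displacement:
  fixes F :: "real \<Rightarrow> real"
  assumes expand: "\<And>s t. -1 \<le> s \<Longrightarrow> s \<le> t \<Longrightarrow> t \<le> 1 \<Longrightarrow> t - s \<le> F t - F s"
    and lip: "\<And>s t. -1 \<le> s \<Longrightarrow> s \<le> t \<Longrightarrow> t \<le> 1 \<Longrightarrow> F t - F s \<le> W * (t - s)"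
    and l: "-1 \<le> l" "l \<le> 1" and m: "-1 \<le> m" "m \<le> 1"
    and shift: "F m - F l = \<delta> * (if l \<le> 0 then F l - F (-1) else F 1 - F l)"
  shows "\<bar>m - l\<bar> \<le> \<bar>\<delta>\<bar> * W * (1 - \<bar>l\<bar>)"
proof -
  have "\<bar>m - l\<bar> \<le> \<bar>F m - F l\<bar>"
    using expand[of l m] expand[of m l] l m by (cases "l \<le> m") auto
  also have "\<dots> = \<bar>\<delta>\<bar> * (if l \<le> 0 then F l - F (-1) else F 1 - F l)"
    using shift expand[of "-1" l] expand[of l 1] l by (simp add: abs_mult)
  also have "\<dots> \<le> \<bar>\<delta>\<bar> * (W * (1 - \<bar>l\<bar>))"
    using lip[of "-1" l] lip[of l 1] l by (auto intro!: mult_left_mono simp: add.commute)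
  finally show ?thesis by (simp add: mult.assoc)
qed

lemma Psi_mid_line_displacement:
  fixes x1 :: real
  assumes "0 \<le> x1" "x1 \<le> 1"
  shows "norm (Psi h \<delta> (x1, 1/2) - (x1, 1/2)) \<le> \<bar>\<delta>\<bar>"
proof (cases "x1 \<le> 1/2")
  case True
  then have "Psi h \<delta> (x1, 1/2) - (x1, 1/2) = (\<delta> * x1, 0)" by (simp add: Psi_def algebra_simps)
  then have "norm (Psi h \<delta> (x1, 1/2) - (x1, 1/2)) = \<bar>\<delta>\<bar> * x1"
    using assms by (simp add: abs_mult)
  then show ?thesis using assms mult_left_le[of x1 "\<bar>\<delta>\<bar>"] by simp
next
  case False
  then have "Psi h \<delta> (x1, 1/2) - (x1, 1/2) = (\<delta> * (1 - x1), 0)"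
    by (simp add: Psi_def field_simps)
  then have "norm (Psi h \<delta> (x1, 1/2) - (x1, 1/2)) = \<bar>\<delta>\<bar> * (1 - x1)"
    using assms by (simp add: abs_mult)
  then show ?thesis using assms mult_left_le[of "1 - x1" "\<bar>\<delta>\<bar>"] by simp
qed

lemma Psi_lower_half: "x2 < 1/2 \<Longrightarrow> Psi h \<delta> (x1, x2) = Psi_low h \<delta> (x1, x2)"
  by (simp add: Psi_def)

lemma Psi_upper_half_displacement:
  assumes "1/2 < x2"
  shows "norm (Psi h \<delta> (x1, x2) - (x1, x2)) = norm (Psi_low h \<delta> (x1, 1 - x2) - (x1, 1 - x2))"
proof -
  obtain p1 p2 where p: "Psi_low h \<delta> (x1, 1 - x2) = (p1, p2)" by fastforce
  have "norm (p1 - x1, 1 - p2 - x2) = norm (p1 - x1, p2 - (1 - x2))"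
    by (simp add: norm_Pair power2_commute algebra_simps)
  then show ?thesis using assms p by (simp add: Psi_def)
qed

section \<open>The profile \<open>h\<close> and the level arcs\<close>

locale profile =
  fixes h h1 :: "real \<Rightarrow> real"
  assumes nonneg: "\<forall>r\<in>{0..<1/2}. h r \<ge> 0"
    and mono: "mono_on {0..<1/2} h"
    and zero: "\<forall>r\<in>{0..1/10}. h r = 0"
    and blowup: "filterlim h at_top (at_left (1/2))"
    and d1: "\<forall>r\<in>{0..<1/2}. (h has_real_derivative h1 r) (at r within {0..<1/2})"
    and O1: "\<exists>M. \<forall>r\<in>{0<..<1/2}. \<bar>(h1 r)\<^sup>2\<bar> \<le> M * (r + h r) ^ 3"
begin

lemma h_continuous: "continuous_on {0..<1/2} h"
  by (rule DERIV_continuous_on) (use d1 in auto)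

lemma h_has_derivative_at: "0 < r \<Longrightarrow> r < 1/2 \<Longrightarrow> (h has_real_derivative h1 r) (at r)"
proof -
  assume r: "0 < r" "r < 1/2"
  have "at r within {0..<1/2} = at r" using r by (intro at_within_interior) simp
  moreover have "(h has_real_derivative h1 r) (at r within {0..<1/2})" using d1 r by auto
  ultimately show ?thesis by simp
qed

lemma deriv_h: "0 < r \<Longrightarrow> r < 1/2 \<Longrightarrow> deriv h r = h1 r"
  using h_has_derivative_at DERIV_imp_deriv by blast

lemma h_mono: "0 \<le> a \<Longrightarrow> a \<le> b \<Longrightarrow> b < 1/2 \<Longrightarrow> h a \<le> h b"
  using mono by (auto simp: mono_on_def)

lemma h_nonneg: "0 \<le> r \<Longrightarrow> r < 1/2 \<Longrightarrow> 0 \<le> h r"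
  using nonneg by auto

lemma h1_nonneg:
  assumes r: "0 < r" "r < 1/2" shows "0 \<le> h1 r"
proof -
  have "((\<lambda>y. (h y - h r) / (y - r)) \<longlongrightarrow> h1 r) (at_right r)"
    using has_field_derivative_at_within[OF h_has_derivative_at[OF r], of "{r<..}"]
    by (simp add: has_field_derivative_iff)
  moreover have "eventually (\<lambda>y. y \<in> {r<..<1/2}) (at_right r)"
    using r by (intro eventually_at_right_real) simp
  then have "eventually (\<lambda>y. 0 \<le> (h y - h r) / (y - r)) (at_right r)"
    by eventually_elim (use h_mono[of r] r in auto)
  ultimately show ?thesis by (intro tendsto_lowerbound) auto
qed

lemma exists_large_h: "c < 1/2 \<Longrightarrow> \<exists>r. c < r \<and> r < 1/2 \<and> Z \<le> h r"
proof -
  assume "c < 1/2"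
  have "eventually (\<lambda>r. Z \<le> h r) (at_left (1/2::real))"
    using blowup by (simp add: filterlim_at_top)
  moreover have "eventually (\<lambda>r. r \<in> {c<..<1/2}) (at_left (1/2::real))"
    using \<open>c < 1/2\<close> by (rule eventually_at_left_real)
  ultimately have "eventually (\<lambda>r. c < r \<and> r < 1/2 \<and> Z \<le> h r) (at_left (1/2::real))"
    by eventually_elim auto
  then show ?thesis by (rule eventually_happens'[rotated]) simp
qed

text \<open>\<open>chord_sq r = (r + h r)\<^sup>2 - (h r)\<^sup>2\<close> is the squared half-length of the chord that the
  level-\<open>r\<close> arc cuts out of the bottom edge; at \<open>r0 h\<close> this chord reaches the corners.\<close>
definition chord_sq :: "real \<Rightarrow> real" where "chord_sq r = r\<^sup>2 + 2 * r * h r"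

lemma chord_sq_strict_mono: "0 \<le> a \<Longrightarrow> a < b \<Longrightarrow> b < 1/2 \<Longrightarrow> chord_sq a < chord_sq b"
proof -
  assume ab: "0 \<le> a" "a < b" "b < 1/2"
  then have "a * h a \<le> b * h b" using h_mono[of a b] h_nonneg[of a] by (intro mult_mono) auto
  moreover have "a\<^sup>2 < b\<^sup>2" using ab by (intro power_strict_mono) auto
  ultimately show ?thesis unfolding chord_sq_def by linarith
qed

lemma chord_sq_eq_quarter_exists: "\<exists>r. 0 < r \<and> r < 1/2 \<and> chord_sq r = 1/4"
proof -
  obtain b where b: "1/4 < b" "b < 1/2" "10 \<le> h b" using exists_large_h[of "1/4" 10] by auto
  have "chord_sq (1/10) \<le> 1/4" using zero by (simp add: chord_sq_def power2_eq_square)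
  moreover have "1/4 \<le> chord_sq b"
    using mult_mono[of "2 * (1/4)" "2 * b" 10 "h b"] b zero_le_power2[of b]
    unfolding chord_sq_def by linarith
  moreover have "continuous_on {1/10..b} chord_sq"
    unfolding chord_sq_def
    by (intro continuous_intros continuous_on_subset[OF h_continuous]) (use b in auto)
  ultimately obtain r where "1/10 \<le> r" "r \<le> b" "chord_sq r = 1/4"
    using IVT'[of chord_sq "1/10" "1/4" b] b by auto
  then show ?thesis using b by (intro exI[of _ r]) auto
qed

lemma r0_spec: "0 < r0 h" "r0 h < 1/2" "chord_sq (r0 h) = 1/4"
proof -
  have "\<exists>!r. 0 < r \<and> r < 1/2 \<and> chord_sq r = 1/4"
  proof (rule ex_ex1I)
    fix x y assume "0 < x \<and> x < 1/2 \<and> chord_sq x = 1/4" "0 < y \<and> y < 1/2 \<and> chord_sq y = 1/4"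
    then show "x = y" using chord_sq_strict_mono[of x y] chord_sq_strict_mono[of y x] by force
  qed (rule chord_sq_eq_quarter_exists)
  moreover have "r0 h = (THE r. 0 < r \<and> r < 1/2 \<and> chord_sq r = 1/4)"
    unfolding r0_def chord_sq_def by (simp add: add.commute)
  ultimately show "0 < r0 h" "r0 h < 1/2" "chord_sq (r0 h) = 1/4"
    using theI'[of "\<lambda>r. 0 < r \<and> r < 1/2 \<and> chord_sq r = 1/4"] by auto
qed

lemma Theta_below_r0:
  assumes r: "0 < r" "r \<le> r0 h"
  shows "(r + h r) * cos (Theta h r) = h r" "0 < Theta h r" "Theta h r \<le> pi/2"
proof -
  have hr: "0 \<le> h r" using h_nonneg[of r] r r0_spec by auto
  define y where "y = h r / (h r + r)"
  have y: "0 \<le> y" "y < 1" using hr r by (auto simp: y_def divide_simps)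
  have T: "Theta h r = arccos y" using r by (simp add: Theta_def y_def)
  show "(r + h r) * cos (Theta h r) = h r" using y r hr by (simp add: T y_def field_simps)
  show "0 < Theta h r" using y arccos_lt_bounded[of y] by (simp add: T)
  show "Theta h r \<le> pi/2" using y arccos_le_pi2[of y] by (simp add: T)
qed

lemma Theta_above_r0:
  assumes r: "r0 h < r" "r < 1/2"
  shows "(r + h r) * sin (Theta h r) = 1/2" "0 < Theta h r" "Theta h r \<le> pi/2"
proof -
  have hr: "0 \<le> h r" using h_nonneg[of r] r r0_spec by auto
  have "1/4 < chord_sq r" using chord_sq_strict_mono[of "r0 h" r] r r0_spec by auto
  moreover have "(r + h r)\<^sup>2 = chord_sq r + (h r)\<^sup>2"
    by (simp add: chord_sq_def power2_eq_square algebra_simps)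
  ultimately have "1/4 < (r + h r)\<^sup>2" using zero_le_power2[of "h r"] by linarith
  then have R: "1/2 < r + h r"
    using power2_less_imp_less[of "1/2" "r + h r"] r r0_spec hr by (simp add: power_divide)
  define y where "y = 1 / (2 * (h r + r))"
  have y: "0 < y" "y < 1" using R by (auto simp: y_def divide_simps)
  have T: "Theta h r = arcsin y" using r by (simp add: Theta_def y_def)
  show "(r + h r) * sin (Theta h r) = 1/2" using y R by (simp add: T y_def field_simps)
  show "0 < Theta h r" using y arcsin_less_mono[of 0 y] by (simp add: T)
  show "Theta h r \<le> pi/2" using y arcsin_ubound[of y] by (simp add: T)
qed

lemma Theta_bounds: "0 < r \<Longrightarrow> r < 1/2 \<Longrightarrow> 0 < Theta h r \<and> Theta h r \<le> pi/2"
  using Theta_below_r0[of r] Theta_above_r0[of r] by (cases "r \<le> r0 h") auto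

text \<open>The two ends \<open>\<theta> = \<plusminus>1\<close> of every level arc lie in the strip \<open>[0,1] \<times> [0,\<infinity>)\<close>.\<close>
lemma Theta_endpoint:
  assumes r: "0 < r" "r < 1/2"
  shows "h r \<le> (r + h r) * cos (Theta h r)" "(r + h r) * sin (Theta h r) \<le> 1/2"
proof -
  define R where "R = r + h r"
  define T where "T = Theta h r"
  have hr: "0 \<le> h r" using h_nonneg[of r] r by auto
  have T: "0 \<le> sin T" "0 \<le> cos T"
    using Theta_bounds[OF r] by (auto simp: T_def intro!: sin_ge_zero cos_ge_zero)
  have R: "0 < R" using r hr by (simp add: R_def)
  have pyth: "(R * sin T)\<^sup>2 + (R * cos T)\<^sup>2 = R\<^sup>2"
    using sin_cos_squared_add[of T] by (simp add: power_mult_distrib flip: distrib_left)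
  have RR: "R\<^sup>2 = chord_sq r + (h r)\<^sup>2" by (simp add: R_def chord_sq_def power2_eq_square algebra_simps)
  show "h r \<le> R * cos T" "R * sin T \<le> 1/2"
  proof (atomize (full), cases "r \<le> r0 h")
    case True
    then have "R * cos T = h r" using Theta_below_r0 r by (simp add: R_def T_def)
    moreover have "chord_sq r \<le> 1/4" using chord_sq_strict_mono[of r "r0 h"] True r r0_spec by force
    ultimately have "(R * sin T)\<^sup>2 \<le> (1/2)\<^sup>2" using pyth RR by (simp add: power2_eq_square)
    then show "h r \<le> R * cos T \<and> R * sin T \<le> 1/2"
      using \<open>R * cos T = h r\<close> by (simp add: power2_le_iff_abs_le)
  next
    case False
    then have "R * sin T = 1/2" using Theta_above_r0 r by (simp add: R_def T_def)
    moreover have "1/4 < chord_sq r" using chord_sq_strict_mono[of "r0 h" r] False r r0_spec by auto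
    ultimately have "(h r)\<^sup>2 \<le> (R * cos T)\<^sup>2"
      using pyth[unfolded \<open>R * sin T = 1/2\<close>] RR by (simp add: power2_eq_square)
    then show "h r \<le> R * cos T \<and> R * sin T \<le> 1/2"
      using \<open>R * sin T = 1/2\<close> R T hr by (simp add: power2_le_iff_abs_le)
  qed
qed

lemma Kinv_lipschitz:
  assumes "0 < r" "r < 1/2"
  shows "norm (Kinv h (r, a) - Kinv h (r, b)) \<le> 2 * (r + h r) * Theta h r * \<bar>a - b\<bar>"
proof -
  define R where "R = r + h r"
  define T where "T = Theta h r"
  have R: "0 \<le> R" using assms h_nonneg[of r] by (simp add: R_def)
  have T: "0 \<le> T" using Theta_bounds[OF assms] by (simp add: T_def)
  have "norm (Kinv h (r, a) - Kinv h (r, b))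
      \<le> \<bar>R * (sin (a*T) - sin (b*T))\<bar> + \<bar>R * (cos (a*T) - cos (b*T))\<bar>"
    using norm_Pair_le[of "R * (sin (a*T) - sin (b*T))" "R * (cos (a*T) - cos (b*T))"]
    by (simp add: Kinv_def R_def T_def algebra_simps)
  also have "\<dots> = R * \<bar>sin (a*T) - sin (b*T)\<bar> + R * \<bar>cos (a*T) - cos (b*T)\<bar>"
    using R by (simp add: abs_mult)
  also have "\<dots> \<le> R * \<bar>a*T - b*T\<bar> + R * \<bar>a*T - b*T\<bar>"
    by (intro add_mono mult_left_mono abs_sin_diff_le abs_cos_diff_le R)
  also have "\<dots> = 2 * R * T * \<bar>a - b\<bar>"
    using T by (simp add: abs_mult flip: left_diff_distrib)
  finally show ?thesis by (simp add: R_def T_def)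
qed

text \<open>The factor \<open>(r + h r) * Theta h r * (1 - \<bar>\<theta>\<bar>)\<close> is the arc length from \<open>Kinv h (r, \<theta>)\<close>
  to the nearer end of its level arc; it is comparable to the distance to the bottom corners.\<close>
lemma arc_le_infdist:
  assumes r: "0 < r" "r < 1/2" and \<theta>: "-1 \<le> \<theta>" "\<theta> \<le> 1"
  shows "(r + h r) * Theta h r * (1 - \<bar>\<theta>\<bar>) \<le> 6 * infdist (Kinv h (r, \<theta>)) {(0,0), (1,0)}"
proof -
  define R where "R = r + h r"
  define T where "T = Theta h r"
  have R: "0 \<le> R" using h_nonneg[of r] r by (simp add: R_def)
  have T: "0 < T" "T \<le> pi/2" using Theta_bounds[OF r] by (auto simp: T_def)
  have left: "R * T * (1 + t) \<le> 6 * infdist (Kinv h (r, t)) {(0,0), (1,0)}"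
    if t: "-1 \<le> t" "t \<le> 0" for t
  proof -
    have "T * (1 + t) \<le> T" using T t by (intro mult_left_le) auto
    moreover have "0 \<le> T * (1 + t)" using T t by simp
    ultimately have tT: "0 \<le> T * (1 + t)" "T * (1 + t) \<le> pi/2" using T by linarith+
    have "-t * T \<le> T" using T t by (intro mult_left_le_one_le) auto
    moreover have "0 \<le> -t * T" using T t by (simp add: mult_nonpos_nonneg)
    ultimately have "0 \<le> sin (-t * T)" using T by (intro sin_ge_zero) auto
    then have "sin (t * T) \<le> 0" by simp
    then have "fst (Kinv h (r, t)) \<le> 1/2"
      using mult_left_mono[of "sin (t * T)" 0 R] R by (simp add: Kinv_def R_def T_def)
    then have dist: "infdist (Kinv h (r, t)) {(0,0), (1,0)} = norm (Kinv h (r, t))"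
      using infdist_bottom_corners_left[of "fst (Kinv h (r, t))" "snd (Kinv h (r, t))"] by simp
    have "R * (T * (1 + t)) \<le> R * (2 * sin (T * (1 + t)))"
      using self_le_two_sin[OF tT] R by (rule mult_left_mono)
    also have "\<dots> \<le> 6 * norm (Kinv h (r, t))"
      using arc_le_norm[OF less_imp_le[OF T(1)] T(2) R _ _ t, of "h r"] Theta_endpoint[OF r]
      by (simp add: Kinv_def R_def T_def)
    finally show ?thesis by (simp add: dist mult.assoc)
  qed
  show ?thesis
  proof (cases "\<theta> \<le> 0")
    case True
    then show ?thesis using left[of \<theta>] \<theta> by (simp add: R_def T_def)
  next
    case False
    then show ?thesis
      using left[of "-\<theta>"] \<theta> Kinv_reflect[of h r \<theta>]
        infdist_bottom_corners_reflect[of "fst (Kinv h (r, \<theta>))" "snd (Kinv h (r, \<theta>))"]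
      by (simp add: R_def T_def)
  qed
qed

definition wmax :: "real \<Rightarrow> real" where
  "wmax r = 1 + h1 r * (1 - cos (Theta h r))"

lemma wfun_bounds:
  assumes r: "0 < r" "r < 1/2" and \<theta>: "-1 \<le> \<theta>" "\<theta> \<le> 1"
  shows "1 \<le> wfun h r \<theta>" "wfun h r \<theta> \<le> wmax r"
proof -
  have h1: "0 \<le> h1 r" using h1_nonneg r by auto
  have T: "0 < Theta h r" "Theta h r \<le> pi/2" using Theta_bounds[OF r] by auto
  have w: "wfun h r \<theta> = 1 + h1 r * (1 - cos (\<theta> * Theta h r))"
    by (simp add: wfun_def deriv_h[OF r] algebra_simps)
  then show "1 \<le> wfun h r \<theta>" using h1 by simp
  have "cos (Theta h r) \<le> cos (\<bar>\<theta>\<bar> * Theta h r)"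
    using T \<theta> by (intro cos_monotone_0_pi_le) (auto simp: mult_le_cancel_right1 abs_le_iff)
  also have "cos (\<bar>\<theta>\<bar> * Theta h r) = cos (\<theta> * Theta h r)"
    by (cases "\<theta> \<ge> 0") auto
  finally show "wfun h r \<theta> \<le> wmax r"
    using mult_left_mono[of "1 - cos (\<theta> * Theta h r)" "1 - cos (Theta h r)" "h1 r"] h1
    by (simp add: w wmax_def)
qed

text \<open>For \<open>r + h r \<le> 1\<close> the growth bound controls \<open>h'\<close> directly; for \<open>r + h r > 1\<close> the factor \<open>1 - cos \<Theta> \<le> sin\<^sup>2 \<Theta> \<le> 1 / (4 (r + h r)\<^sup>2)\<close>
  compensates the growth of \<open>h'\<close>.\<close>
lemma wmax_le:
  assumes r: "0 < r" "r < 1/2" and M: "(h1 r)\<^sup>2 \<le> M * (r + h r) ^ 3"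
  shows "wmax r \<le> 2 + \<bar>M\<bar>"
proof -
  define R where "R = r + h r"
  define T where "T = Theta h r"
  have R: "0 < R" using h_nonneg[of r] r by (simp add: R_def)
  have h1: "0 \<le> h1 r" using h1_nonneg r by auto
  have "(h1 r)\<^sup>2 \<le> M * R ^ 3" using M by (simp add: R_def)
  also have "\<dots> \<le> \<bar>M\<bar> * R ^ 3" using R by (intro mult_right_mono) auto
  finally have MR: "(h1 r)\<^sup>2 \<le> \<bar>M\<bar> * R ^ 3" .
  have cT: "0 \<le> cos T" "cos T \<le> 1" using Theta_bounds[OF r] by (auto simp: T_def intro!: cos_ge_zero)
  have "h1 r * (1 - cos T) \<le> 1 + \<bar>M\<bar>"
  proof (cases "R \<le> 1")
    case True
    have "\<bar>M\<bar> * R ^ 3 \<le> \<bar>M\<bar> * 1" using True R by (intro mult_left_mono power_le_one) auto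
    then have "h1 r \<le> 1 + \<bar>M\<bar>" using MR le_one_plus_square[of "h1 r"] by linarith
    moreover have "h1 r * (1 - cos T) \<le> h1 r" using h1 cT by (simp add: mult_left_le)
    ultimately show ?thesis by linarith
  next
    case False
    define u where "u = h1 r / R\<^sup>2"
    have "u\<^sup>2 * R ^ 4 \<le> \<bar>M\<bar> * R ^ 3" using MR R by (simp add: u_def power_divide flip: power_mult)
    then have "u\<^sup>2 * R \<le> \<bar>M\<bar>" using R by (simp add: power_Suc2 power4_eq_xxxx power3_eq_cube mult.assoc)
    moreover have "u\<^sup>2 \<le> u\<^sup>2 * R" using False by (simp add: mult_le_cancel_left1)
    ultimately have u: "u \<le> 1 + \<bar>M\<bar>" using le_one_plus_square[of u] by linarith
    have "1 - cos T \<le> (sin T)\<^sup>2"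
      using sin_cos_squared_add[of T] mult_right_mono[OF cT(2) cT(1)] by (simp add: power2_eq_square)
    also have "\<dots> \<le> 1 / (4 * R\<^sup>2)"
    proof -
      have "0 \<le> sin T" using Theta_bounds[OF r] by (auto simp: T_def intro!: sin_ge_zero)
      then have "(R * sin T)\<^sup>2 \<le> (1/2)\<^sup>2"
        using Theta_endpoint(2)[OF r] R by (intro power_mono) (auto simp: R_def T_def)
      then show ?thesis using R by (simp add: power_mult_distrib field_simps)
    qed
    finally have "h1 r * (1 - cos T) \<le> h1 r * (1 / (4 * R\<^sup>2))" using h1 by (rule mult_left_mono)
    also have "\<dots> = u / 4" by (simp add: u_def)
    finally show ?thesis using u by linarith
  qed
  then show ?thesis by (simp add: wmax_def T_def)
qed

lemma wmax_bounded: "\<exists>W. \<forall>r\<in>{0<..<1/2}. wmax r \<le> W"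
proof -
  obtain M where "\<forall>r\<in>{0<..<1/2}. \<bar>(h1 r)\<^sup>2\<bar> \<le> M * (r + h r) ^ 3"
    using O1 by blast
  then show ?thesis by (intro exI[of _ "2 + \<bar>M\<bar>"]) (auto intro: wmax_le)
qed

section \<open>The angular rescaling \<open>g\<^sub>r\<close>\<close>

definition cum_weight :: "real \<Rightarrow> real \<Rightarrow> real" where
  "cum_weight r t = integral {-1..t} (wfun h r)"

lemma wfun_integrable: "wfun h r integrable_on {a..b}"
  unfolding wfun_def by (intro integrable_continuous_interval continuous_intros)

lemma cum_weight_diff:
  assumes "-1 \<le> s" "s \<le> t"
  shows "cum_weight r t - cum_weight r s = integral {s..t} (wfun h r)"
  using Henstock_Kurzweil_Integration.integral_combine[OF assms wfun_integrable[of r]]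
  by (simp add: cum_weight_def)

lemma cum_weight_increment_bounds:
  assumes r: "0 < r" "r < 1/2" and st: "-1 \<le> s" "s \<le> t" "t \<le> 1"
  shows "t - s \<le> cum_weight r t - cum_weight r s"
    "cum_weight r t - cum_weight r s \<le> wmax r * (t - s)"
proof -
  have "integral {s..t} (\<lambda>_. 1::real) \<le> integral {s..t} (wfun h r)"
    by (rule integral_le) (use wfun_bounds[OF r] st in \<open>auto intro: wfun_integrable\<close>)
  then show "t - s \<le> cum_weight r t - cum_weight r s"
    using st by (simp add: cum_weight_diff)
  have "integral {s..t} (wfun h r) \<le> integral {s..t} (\<lambda>_. wmax r)"
    by (rule integral_le) (use wfun_bounds[OF r] st in \<open>auto intro: wfun_integrable\<close>)
  then show "cum_weight r t - cum_weight r s \<le> wmax r * (t - s)"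
    using st by (simp add: cum_weight_diff mult.commute)
qed

lemma cum_weight_one: "cum_weight r 1 = 2 * cum_weight r 0"
proof -
  have "integral {-1..-0} (\<lambda>x. wfun h r (-x)) = integral {0..1} (wfun h r)"
    by (rule Henstock_Kurzweil_Integration.integral_reflect_real)
  moreover have "(\<lambda>x. wfun h r (-x)) = wfun h r" by (simp add: wfun_def fun_eq_iff)
  ultimately have "cum_weight r 0 = integral {0..1} (wfun h r)" by (simp add: cum_weight_def)
  then show ?thesis using cum_weight_diff[of 0 1 r] by simp
qed

lemma gfun_eq_THE:
  assumes l: "-1 \<le> l" "l \<le> 1"
  shows "gfun h \<delta> r l = (THE m. m \<in> {-1..1} \<and> cum_weight r m =
     (if l \<le> 0 then (1 + \<delta>) * cum_weight r l
      else cum_weight r 1 - (1 - \<delta>) * (cum_weight r 1 - cum_weight r l)))"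
proof -
  have tail: "integral {t..1} (wfun h r) = cum_weight r 1 - cum_weight r t" if "-1 \<le> t" "t \<le> 1" for t
    using cum_weight_diff[of t 1 r] that by simp
  have "(m \<in> {-1..1} \<and> (if l \<le> 0
          then (1 + \<delta>) * integral {-1..l} (wfun h r) = integral {-1..m} (wfun h r)
          else (1 - \<delta>) * integral {l..1} (wfun h r) = integral {m..1} (wfun h r))) \<longleftrightarrow>
        (m \<in> {-1..1} \<and> cum_weight r m =
          (if l \<le> 0 then (1 + \<delta>) * cum_weight r l
           else cum_weight r 1 - (1 - \<delta>) * (cum_weight r 1 - cum_weight r l)))" for m
    using tail[of l] tail[of m] l by (cases "l \<le> 0") (auto simp: cum_weight_def)
  then show ?thesis unfolding gfun_def by simp
qed

lemma gfun_displacement: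
  assumes r: "0 < r" "r < 1/2" and \<delta>: "\<bar>\<delta>\<bar> < 1" and l: "-1 \<le> l" "l \<le> 1"
  shows "gfun h \<delta> r l \<in> {-1..1}" "\<bar>gfun h \<delta> r l - l\<bar> \<le> \<bar>\<delta>\<bar> * wmax r * (1 - \<bar>l\<bar>)"
proof -
  define F where "F = cum_weight r"
  define y where "y = (if l \<le> 0 then (1 + \<delta>) * F l else F 1 - (1 - \<delta>) * (F 1 - F l))"
  note inc = cum_weight_increment_bounds[OF r, folded F_def]
  have F: "F (-1) = 0" "F 1 = 2 * F 0" using cum_weight_one by (simp_all add: F_def cum_weight_def)
  have Fl: "0 \<le> F l" "F l \<le> F 1" using inc(1)[of "-1" l] inc(1)[of l 1] l F by auto
  have "F (-1) \<le> y \<and> y \<le> F 1"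
  proof (cases "l \<le> 0")
    case True
    have "F l \<le> F 0" using inc(1)[of l 0] l True by simp
    moreover have "0 \<le> (1 + \<delta>) * F l" "(1 + \<delta>) * F l \<le> 2 * F l"
      using \<delta> Fl mult_right_mono[of "1 + \<delta>" 2 "F l"] by auto
    ultimately show ?thesis using F True by (simp add: y_def)
  next
    case False
    have "F 0 \<le> F l" using inc(1)[of 0 l] l False by simp
    moreover have "0 \<le> (1 - \<delta>) * (F 1 - F l)" "(1 - \<delta>) * (F 1 - F l) \<le> 2 * (F 1 - F l)"
      using \<delta> Fl mult_right_mono[of "1 - \<delta>" 2 "F 1 - F l"] by auto
    ultimately show ?thesis using F False by (simp add: y_def)
  qed
  moreover have "continuous_on {-1..1} F"
    unfolding F_def cum_weight_def by (intro indefinite_integral_continuous_1 wfun_integrable)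
  ultimately have "\<exists>!m. m \<in> {-1..1} \<and> F m = y"
    by (intro expanding_unique_preimage inc(1)) auto
  then have m: "gfun h \<delta> r l \<in> {-1..1} \<and> F (gfun h \<delta> r l) = y"
    unfolding gfun_eq_THE[OF l] F_def[symmetric] y_def[symmetric] by (rule theI')
  then show "gfun h \<delta> r l \<in> {-1..1}" by simp
  have "F (gfun h \<delta> r l) - F l = \<delta> * (if l \<le> 0 then F l - F (-1) else F 1 - F l)"
    using m F by (cases "l \<le> 0") (simp_all add: y_def algebra_simps)
  with m show "\<bar>gfun h \<delta> r l - l\<bar> \<le> \<bar>\<delta>\<bar> * wmax r * (1 - \<bar>l\<bar>)"
    using expanding_preimage_displacement[OF inc(1) inc(2) l] by auto
qed

section \<open>Inverting the polar coordinates\<close>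

text \<open>\<open>level_gap a y2 r = 0\<close> says that \<open>(1/2 + a, y2)\<close> lies on the circle carrying the level-\<open>r\<close>
  arc, which has centre \<open>(1/2, - h r)\<close> and radius \<open>r + h r\<close>.\<close>
definition level_gap :: "real \<Rightarrow> real \<Rightarrow> real \<Rightarrow> real" where
  "level_gap a y2 r = (r + h r)\<^sup>2 - (y2 + h r)\<^sup>2 - a\<^sup>2"

lemma level_gap_strict_mono:
  assumes "0 \<le> y2" "y2 \<le> r" "r < r'" "r' < 1/2"
  shows "level_gap a y2 r < level_gap a y2 r'"
proof -
  have gap: "level_gap a y2 s = s\<^sup>2 - y2\<^sup>2 + 2 * h s * (s - y2) - a\<^sup>2" for s
    by (simp add: level_gap_def power2_eq_square algebra_simps)
  have "h r * (r - y2) \<le> h r' * (r' - y2)"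
    using h_mono[of r r'] h_nonneg[of r] assms by (intro mult_mono) auto
  moreover have "r\<^sup>2 < r'\<^sup>2" using assms by (intro power_strict_mono) auto
  ultimately show ?thesis unfolding gap by linarith
qed

lemma Kinv_on_level:
  assumes "Kinv h (r, \<theta>) = (y1, y2)" "0 < r" "r < 1/2"
  shows "level_gap (y1 - 1/2) y2 r = 0" "y2 \<le> r" "y1 - 1/2 = (r + h r) * sin (\<theta> * Theta h r)"
proof -
  have y1: "y1 - 1/2 = (r + h r) * sin (\<theta> * Theta h r)"
    and y2: "y2 + h r = (r + h r) * cos (\<theta> * Theta h r)"
    using assms by (auto simp: Kinv_def)
  then show "y1 - 1/2 = (r + h r) * sin (\<theta> * Theta h r)" by simp
  have "(y1 - 1/2)\<^sup>2 + (y2 + h r)\<^sup>2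
      = (r + h r)\<^sup>2 * ((sin (\<theta> * Theta h r))\<^sup>2 + (cos (\<theta> * Theta h r))\<^sup>2)"
    unfolding y1 y2 by (simp only: power_mult_distrib distrib_left)
  then show "level_gap (y1 - 1/2) y2 r = 0" by (simp add: level_gap_def)
  have "(r + h r) * cos (\<theta> * Theta h r) \<le> (r + h r) * 1"
    using h_nonneg[of r] assms by (intro mult_left_mono) auto
  then show "y2 \<le> r" using y2 by simp
qed

lemma Kinv_inj:
  assumes eq: "Kinv h (r, \<theta>) = Kinv h (r', \<theta>')" and y2: "0 \<le> snd (Kinv h (r, \<theta>))"
    and r: "r \<in> {0<..<1/2}" "r' \<in> {0<..<1/2}" and \<theta>: "\<theta> \<in> {-1..1}" "\<theta>' \<in> {-1..1}"
  shows "r = r' \<and> \<theta> = \<theta>'"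
proof -
  obtain y1 y2 where y: "Kinv h (r, \<theta>) = (y1, y2)" by fastforce
  note on = Kinv_on_level[OF y] and on' = Kinv_on_level[OF eq[symmetric, unfolded y]]
  have rr: "r = r'"
    using level_gap_strict_mono[of y2 r r' "y1 - 1/2"] level_gap_strict_mono[of y2 r' r "y1 - 1/2"]
      on on' r y2 y by (cases r r' rule: linorder_cases) auto
  have T: "0 < Theta h r" "Theta h r \<le> pi/2" using Theta_bounds r by auto
  have arcsin_sin_\<theta>: "arcsin (sin (t * Theta h r)) = t * Theta h r" if "t \<in> {-1..1}" for t
  proof -
    have "\<bar>t * Theta h r\<bar> \<le> pi/2"
      using mult_mono[of "\<bar>t\<bar>" 1 "Theta h r" "pi/2"] that T by (simp add: abs_mult abs_le_iff)
    then show ?thesis unfolding abs_le_iff by (intro arcsin_sin) auto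
  qed
  have "sin (\<theta> * Theta h r) = sin (\<theta>' * Theta h r)"
    using on(3) on'(3) h_nonneg[of r] r rr by auto
  then have "arcsin (sin (\<theta> * Theta h r)) = arcsin (sin (\<theta>' * Theta h r))" by simp
  then have "\<theta> * Theta h r = \<theta>' * Theta h r"
    unfolding arcsin_sin_\<theta>[OF \<theta>(1)] arcsin_sin_\<theta>[OF \<theta>(2)] .
  then show ?thesis using T rr by simp
qed

lemma level_radius_exists:
  assumes y: "0 \<le> y1" "y1 \<le> 1" "0 \<le> y2" "y2 < 1/2" "(y1, y2) \<noteq> (1/2, 0)"
  shows "\<exists>r. 0 < r \<and> r < 1/2 \<and> level_gap (y1 - 1/2) y2 r = 0"
proof -
  define a where "a = y1 - 1/2"
  have pos: "0 < y2\<^sup>2 + a\<^sup>2" using y by (auto simp: a_def add_pos_nonneg add_nonneg_pos)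
  define r1 where "r1 = min (1/10) (sqrt (y2\<^sup>2 + a\<^sup>2) / 2)"
  have r1: "0 < r1" "r1 \<le> 1/10" using pos by (auto simp: r1_def)
  have "r1\<^sup>2 \<le> (sqrt (y2\<^sup>2 + a\<^sup>2) / 2)\<^sup>2" using r1 by (intro power_mono) (auto simp: r1_def)
  then have "r1\<^sup>2 < y2\<^sup>2 + a\<^sup>2" using pos by (simp add: power_divide)
  moreover have "h r1 = 0" using zero r1 by auto
  ultimately have neg: "level_gap a y2 r1 < 0" by (simp add: level_gap_def)
  define Z where "Z = (a\<^sup>2 + 1) / (1/2 - y2)"
  obtain r2 where r2: "max r1 ((1/2 + y2)/2) < r2" "r2 < 1/2" "Z \<le> h r2"
    using exists_large_h[of "max r1 ((1/2 + y2)/2)" Z] y r1 by auto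
  have "Z * ((1/2 - y2) / 2) \<le> h r2 * (r2 - y2)"
    using r1 r2 y h_nonneg[of r2] by (intro mult_mono) (auto simp: Z_def)
  moreover have "Z * ((1/2 - y2) / 2) = (a\<^sup>2 + 1) / 2" using y by (simp add: Z_def)
  ultimately have "a\<^sup>2 + 1 \<le> 2 * (h r2 * (r2 - y2))" by simp
  moreover have "y2\<^sup>2 \<le> r2\<^sup>2" using r2 y by (intro power_mono) auto
  ultimately have "0 < r2\<^sup>2 - y2\<^sup>2 + 2 * (h r2 * (r2 - y2)) - a\<^sup>2" by linarith
  also have "\<dots> = level_gap a y2 r2" by (simp add: level_gap_def power2_eq_square algebra_simps)
  finally have pos2: "0 < level_gap a y2 r2" .
  have "continuous_on {r1..r2} (level_gap a y2)"
    unfolding level_gap_def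
    by (intro continuous_intros continuous_on_subset[OF h_continuous]) (use r1 r2 in auto)
  then obtain r where "r1 \<le> r" "r \<le> r2" "level_gap a y2 r = 0"
    using IVT'[of "level_gap a y2" r1 0 r2] neg pos2 r2 by auto
  then show ?thesis using r1 r2 by (intro exI[of _ r]) (auto simp: a_def)
qed

text \<open>The level-\<open>r\<close> arc is exactly the part of its circle inside the strip \<open>[0,1] \<times> [0,\<infinity>)\<close>.\<close>
lemma abs_angle_le_Theta:
  assumes r: "0 < r" "r < 1/2" and \<phi>: "\<bar>\<phi>\<bar> \<le> pi/2"
    and above: "h r \<le> (r + h r) * cos \<phi>" and inside: "(r + h r) * \<bar>sin \<phi>\<bar> \<le> 1/2"
  shows "\<bar>\<phi>\<bar> \<le> Theta h r"
proof (rule ccontr)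
  define R where "R = r + h r"
  define T where "T = Theta h r"
  assume "\<not> \<bar>\<phi>\<bar> \<le> Theta h r"
  then have less: "T < \<bar>\<phi>\<bar>" by (simp add: T_def)
  have R: "0 < R" using h_nonneg[of r] r by (simp add: R_def)
  have T: "0 < T" "T \<le> pi/2" using Theta_bounds[OF r] by (auto simp: T_def)
  show False
  proof (cases "r \<le> r0 h")
    case True
    have "cos \<bar>\<phi>\<bar> < cos T" using less T \<phi> by (intro cos_monotone_0_pi) auto
    then have "R * cos \<phi> < R * cos T" using R by simp
    then show False using Theta_below_r0(1)[OF r(1) True] above by (simp add: R_def T_def)
  next
    case False
    have "sin T < sin \<bar>\<phi>\<bar>" using less T \<phi> by (intro sin_monotone_2pi) auto
    also have "sin \<bar>\<phi>\<bar> = \<bar>sin \<phi>\<bar>"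
      using sin_ge_zero[of "\<bar>\<phi>\<bar>"] \<phi> by (cases "0 \<le> \<phi>") auto
    finally have "R * sin T < R * \<bar>sin \<phi>\<bar>" using R by simp
    then show False using Theta_above_r0(1)[of r] False r inside by (simp add: R_def T_def)
  qed
qed

lemma Kinv_angle_exists:
  assumes r: "0 < r" "r < 1/2" and gap: "level_gap a y2 r = 0"
    and y2: "0 \<le> y2" and a: "\<bar>a\<bar> \<le> 1/2"
  shows "\<exists>\<theta>\<in>{-1..1}. Kinv h (r, \<theta>) = (1/2 + a, y2)"
proof -
  define R where "R = r + h r"
  define T where "T = Theta h r"
  define \<phi> where "\<phi> = arcsin (a / R)"
  have hr: "0 \<le> h r" using h_nonneg[of r] r by auto
  have R: "0 < R" using hr r by (simp add: R_def)
  have T: "0 < T" using Theta_bounds[OF r] by (simp add: T_def)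
  have circle: "R\<^sup>2 = (y2 + h r)\<^sup>2 + a\<^sup>2" using gap by (simp add: level_gap_def R_def)
  then have "\<bar>a\<bar>\<^sup>2 \<le> R\<^sup>2" by simp
  then have "\<bar>a\<bar> \<le> R" using power2_le_imp_le[of "\<bar>a\<bar>" R] R by simp
  then have aR: "-1 \<le> a / R" "a / R \<le> 1" using R by (auto simp: divide_simps abs_le_iff)
  then have sin\<phi>: "R * sin \<phi> = a" using R by (simp add: \<phi>_def)
  have "cos \<phi> = sqrt (1 - (a / R)\<^sup>2)" using aR by (simp add: \<phi>_def cos_arcsin)
  also have "\<dots> = (y2 + h r) / R"
  proof (rule real_sqrt_unique)
    have "((y2 + h r) / R)\<^sup>2 + (a / R)\<^sup>2 = ((y2 + h r)\<^sup>2 + a\<^sup>2) / R\<^sup>2"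
      by (simp add: power_divide flip: add_divide_distrib)
    also have "\<dots> = 1" using R by (simp flip: circle)
    finally show "((y2 + h r) / R)\<^sup>2 = 1 - (a / R)\<^sup>2" by linarith
  qed (use R hr y2 in simp)
  finally have cos\<phi>: "R * cos \<phi> = y2 + h r" using R by simp
  have "\<bar>\<phi>\<bar> \<le> pi/2" using arcsin_bounded[OF aR] by (auto simp: \<phi>_def)
  moreover have "(r + h r) * \<bar>sin \<phi>\<bar> = \<bar>a\<bar>"
    using R unfolding R_def[symmetric] by (simp flip: sin\<phi> add: abs_mult)
  ultimately have "\<bar>\<phi>\<bar> \<le> T"
    using abs_angle_le_Theta[OF r] cos\<phi> y2 a by (simp add: R_def T_def)
  then have "\<phi> / T \<in> {-1..1}" using T by (auto simp: divide_simps abs_le_iff)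
  moreover have "Kinv h (r, \<phi> / T) = (1/2 + a, y2)"
    using sin\<phi> cos\<phi> T by (simp add: Kinv_def R_def T_def)
  ultimately show ?thesis by blast
qed

lemma K_inverse:
  assumes y: "0 \<le> y1" "y1 \<le> 1" "0 \<le> y2" "y2 < 1/2" "(y1, y2) \<noteq> (1/2, 0)"
  shows "K h (y1, y2) \<in> {0<..<1/2} \<times> {-1..1}" "Kinv h (K h (y1, y2)) = (y1, y2)"
proof -
  obtain r where r: "0 < r" "r < 1/2" "level_gap (y1 - 1/2) y2 r = 0"
    using level_radius_exists[OF y] by blast
  have "\<bar>y1 - 1/2\<bar> \<le> 1/2" unfolding abs_le_iff using y by linarith
  then obtain \<theta> where "\<theta> \<in> {-1..1}" "Kinv h (r, \<theta>) = (y1, y2)"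
    using Kinv_angle_exists[OF r(1,2) r(3) y(3)] by auto
  then have "\<exists>p. p \<in> {0<..<1/2} \<times> {-1..1} \<and> Kinv h p = (y1, y2)" using r by auto
  moreover have "p = q" if "p \<in> {0<..<1/2} \<times> {-1..1} \<and> Kinv h p = (y1, y2)"
      "q \<in> {0<..<1/2} \<times> {-1..1} \<and> Kinv h q = (y1, y2)" for p q
    using that Kinv_inj[of "fst p" "snd p" "fst q" "snd q"] y by (auto simp: mem_Times_iff prod_eq_iff)
  ultimately have "\<exists>!p. p \<in> {0<..<1/2} \<times> {-1..1} \<and> Kinv h p = (y1, y2)" by blast
  from theI'[OF this] show "K h (y1, y2) \<in> {0<..<1/2} \<times> {-1..1}" "Kinv h (K h (y1, y2)) = (y1, y2)"
    unfolding K_def by auto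
qed

section \<open>Displacement of \<open>\<Psi>\<^sub>\<delta>\<close>\<close>

lemma Psi_low_displacement:
  assumes \<delta>: "\<bar>\<delta>\<bar> < 1" and W: "\<And>r. 0 < r \<Longrightarrow> r < 1/2 \<Longrightarrow> wmax r \<le> W" "0 \<le> W"
    and y: "0 \<le> y1" "y1 \<le> 1" "0 \<le> y2" "y2 < 1/2"
  shows "norm (Psi_low h \<delta> (y1, y2) - (y1, y2)) \<le> 12 * W * \<bar>\<delta>\<bar> * infdist (y1, y2) {(0,0), (1,0)}"
proof (cases "(y1, y2) = (1/2, 0)")
  case True
  have "0 \<le> 12 * W * \<bar>\<delta>\<bar> * infdist (y1, y2) {(0,0), (1,0)}"
    using W(2) by (simp add: infdist_nonneg)
  with True show ?thesis by (simp add: Psi_low_def)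
next
  case False
  obtain r \<theta> where K: "K h (y1, y2) = (r, \<theta>)" by fastforce
  then have r: "0 < r" "r < 1/2" and \<theta>: "-1 \<le> \<theta>" "\<theta> \<le> 1" and y: "Kinv h (r, \<theta>) = (y1, y2)"
    using K_inverse[OF y False] by auto
  define g where "g = gfun h \<delta> r \<theta>"
  define A where "A = (r + h r) * Theta h r"
  have A: "0 \<le> A" using h_nonneg[of r] Theta_bounds[OF r] r by (simp add: A_def)
  have "Psi_low h \<delta> (y1, y2) = Kinv h (r, g)"
    unfolding Psi_low_def if_not_P[OF False] K by (simp add: g_def)
  then have "norm (Psi_low h \<delta> (y1, y2) - (y1, y2)) = norm (Kinv h (r, g) - Kinv h (r, \<theta>))"
    by (simp add: y)
  also have "\<dots> \<le> 2 * A * \<bar>g - \<theta>\<bar>"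
    using Kinv_lipschitz[OF r, of g \<theta>] by (simp add: A_def algebra_simps)
  also have "\<dots> \<le> 2 * A * (\<bar>\<delta>\<bar> * W * (1 - \<bar>\<theta>\<bar>))"
  proof -
    have "\<bar>\<delta>\<bar> * wmax r * (1 - \<bar>\<theta>\<bar>) \<le> \<bar>\<delta>\<bar> * W * (1 - \<bar>\<theta>\<bar>)"
      using W(1)[OF r] \<theta> by (intro mult_right_mono mult_left_mono) auto
    then have "\<bar>g - \<theta>\<bar> \<le> \<bar>\<delta>\<bar> * W * (1 - \<bar>\<theta>\<bar>)"
      using gfun_displacement(2)[OF r \<delta> \<theta>] unfolding g_def by linarith
    then show ?thesis using A by (intro mult_left_mono) auto
  qed
  also have "\<dots> = 2 * W * \<bar>\<delta>\<bar> * (A * (1 - \<bar>\<theta>\<bar>))" by (simp add: algebra_simps)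
  also have "\<dots> \<le> 2 * W * \<bar>\<delta>\<bar> * (6 * infdist (y1, y2) {(0,0), (1,0)})"
    using arc_le_infdist[OF r \<theta>] y W(2) by (intro mult_left_mono) (simp_all add: A_def)
  finally show ?thesis by simp
qed

lemma Psi_displacement:
  assumes \<delta>: "\<bar>\<delta>\<bar> < 1" and W: "\<And>r. 0 < r \<Longrightarrow> r < 1/2 \<Longrightarrow> wmax r \<le> W" "1 \<le> W"
    and x: "x \<in> {0..1} \<times> {0..1}"
  shows "norm (Psi h \<delta> x - x) \<le> 12 * W * \<bar>\<delta>\<bar> * infdist x corners"
proof -
  obtain x1 x2 where x12: "x = (x1, x2)" by fastforce
  have x1: "0 \<le> x1" "x1 \<le> 1" and x2: "0 \<le> x2" "x2 \<le> 1" using x x12 by auto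
  note low = Psi_low_displacement[OF \<delta> W(1) _ x1]
  consider "x2 < 1/2" | "x2 = 1/2" | "1/2 < x2" by linarith
  then show ?thesis
  proof cases
    case 1
    then show ?thesis
      using low[of x2] W x2 by (simp add: x12 Psi_lower_half infdist_corners_lower_half)
  next
    case 2
    have "norm (Psi h \<delta> x - x) \<le> \<bar>\<delta>\<bar> * (2 * infdist x corners)"
      using Psi_mid_line_displacement[OF x1, of h \<delta>] infdist_corners_mid_line[of x1]
        mult_left_mono[of 1 "2 * infdist x corners" "\<bar>\<delta>\<bar>"]
      by (simp add: x12 2)
    also have "\<dots> \<le> 12 * W * \<bar>\<delta>\<bar> * infdist x corners"
      using W(2) infdist_nonneg[of x corners] mult_right_mono[of 2 "12 * W" "\<bar>\<delta>\<bar> * infdist x corners"]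
      by (simp add: algebra_simps)
    finally show ?thesis .
  next
    case 3
    then show ?thesis
      using low[of "1 - x2"] W x2 Psi_upper_half_displacement[OF 3, of h \<delta> x1]
        infdist_corners_reflect[of x1 x2] infdist_corners_lower_half[of "1 - x2" x1]
      by (simp add: x12)
  qed
qed

end

theorem proposition2p6:
  fixes h h1 h2 h3 :: "real \<Rightarrow> real"
  assumes nonneg: "\<forall>r\<in>{0..<1/2}. h r \<ge> 0"
    and mono: "mono_on {0..<1/2} h"
    and zero: "\<forall>r\<in>{0..1/10}. h r = 0"
    and blowup: "filterlim h at_top (at_left (1/2))"
    and d1: "\<forall>r\<in>{0..<1/2}. (h has_real_derivative h1 r) (at r within {0..<1/2})"
    and d2: "\<forall>r\<in>{0..<1/2}. (h1 has_real_derivative h2 r) (at r within {0..<1/2})"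
    and d3: "\<forall>r\<in>{0..<1/2}. (h2 has_real_derivative h3 r) (at r within {0..<1/2})"
    and c3: "continuous_on {0..<1/2} h3"
    and O1: "\<exists>M. \<forall>r\<in>{0<..<1/2}. \<bar>(h1 r)\<^sup>2\<bar> \<le> M * (r + h r) ^ 3"
    and O2: "\<exists>M. \<forall>r\<in>{0<..<1/2}. \<bar>h2 r * h1 r\<bar> \<le> M * (r + h r) ^ 3"
    and O3: "\<exists>M. \<forall>r\<in>{0<..<1/2}. \<bar>h3 r\<bar> \<le> M * (r + h r) ^ 2"
  shows "\<exists>C>0. \<forall>\<delta>::real. -1 < \<delta> \<and> \<delta> < 1 \<longrightarrow>
           (\<forall>x \<in> {0..1} \<times> {0..1}.
              norm (Psi h \<delta> x - x) \<le> C * \<bar>\<delta>\<bar> * infdist x corners)"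
proof -
  interpret profile h h1
    using nonneg mono zero blowup d1 O1 by unfold_locales
  obtain W where "\<forall>r\<in>{0<..<1/2}. wmax r \<le> W" using wmax_bounded by blast
  then have W: "\<And>r. 0 < r \<Longrightarrow> r < 1/2 \<Longrightarrow> wmax r \<le> max 1 W" "1 \<le> max 1 W"
    by (auto simp: le_max_iff_disj)
  show ?thesis
    using Psi_displacement[OF _ W] by (intro exI[of _ "12 * max 1 W"]) (auto simp: abs_less_iff)
qed

end
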